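(* Let $A$ be $\mathbb{Z}$ or $\mathbb{Z}/n\mathbb{Z}$ for an integer $n\geq 2$, and $H_A=H_1(\Sigma_2;A)$, identified with $A^4$ via the basis $x_1,x_2,y_1,y_2$, with $v_i$ denoting the $i$-th coordinate of $v\in H_A$. Let $\alpha,\beta,\gamma,\delta$ be the generators of the genus-$2$ Goeritz group $\mathcal{E}_2$ described in the context. Then \[ H^1(\mathcal{E}_2;H_A)\cong \{d \in Z^{1}(\mathcal{E}_2;H_A) \;:\; d(\delta)_1 - d(\alpha)_1 = d(\gamma)_2 - d(\beta)_2 = d(\gamma)_3 - d(\alpha)_3 = d(\beta)_4 - d(\delta)_4 = 0 \}. \]
   Context: Let $S^3=H_2\cup H_2^*$ be a genus-$2$ Heegaard splitting with Heegaard surface $\Sigma_2=\partial H_2$. The genus-$2$ Goeritz group $\mathcal{E}_2$ is the group of isotopy classes $[f]$ of orientation-preserving homeomorphisms of $\Sigma_2$ for which there is an orientation-preserving self-homeomorphism $F$ of $S^3$ with $F(H_2)=H_2$ and $[F|_{\Sigma_2}]=[f]$; it acts on $H_A$ by induced maps. Fix a basis $x_1,x_2,y_1,y_2$ of $H_1(\Sigma_2;\mathbb{Z})$ (inducing one of $H_A$). $\mathcal{E}_2$ is generated by four elements $\alpha,\beta,\gamma,\delta$ acting as follows: $\alpha_*(x_i)=-x_i$, $\alpha_*(y_i)=-y_i$ ($i=1,2$); $\beta_*(x_1)=x_1$, $\beta_*(x_2)=-x_2$, $\beta_*(y_1)=y_1$, $\beta_*(y_2)=-y_2$; $\gamma_*(x_1)=-x_2$,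 $\gamma_*(x_2)=-x_1$, $\gamma_*(y_1)=-y_2$, $\gamma_*(y_2)=-y_1$; $\delta_*(x_1)=-x_1+x_2$, $\delta_*(x_2)=-x_1$, $\delta_*(y_1)=y_2$, $\delta_*(y_2)=-y_1-y_2$. $Z^1(\mathcal{E}_2;H_A)$ is the group of crossed homomorphisms $d:\mathcal{E}_2\to H_A$, i.e. maps with $d(\phi\psi)=d(\phi)+\phi\, d(\psi)$ for all $\phi,\psi\in\mathcal{E}_2$; $d(\alpha)$ etc. denote the values of $d$ on the classes of these generators, and $d(\phi)_i$ the $i$-th coordinate. $H^1(\mathcal{E}_2;H_A)$ is the first twisted group cohomology, equal to $Z^1(\mathcal{E}_2;H_A)$ modulo the principal crossed homomorphisms $\phi\mapsto \phi u-u$, $u\in H_A$. *)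

theory Defs
  imports "HOL-Algebra.Coset" "HOL-Algebra.Generated_Groups"
begin

text \<open>Coordinates of H_A = H_1(Sigma_2; A) = A^4 w.r.t. the basis x1, x2, y1, y2
  (coordinates 1,2,3,4 of the paper).  Elements of H_A are functions coord => A.\<close>
datatype coord = X1 | X2 | Y1 | Y2

definition basis :: "coord \<Rightarrow> coord \<Rightarrow> 'a::comm_ring_1" where
  "basis i = (\<lambda>j. if j = i then 1 else 0)"

definition crossed_homs ::
  "('g, 'b) monoid_scheme \<Rightarrow> ('g \<Rightarrow> (coord \<Rightarrow> 'a) \<Rightarrow> (coord \<Rightarrow> 'a))
     \<Rightarrow> ('g \<Rightarrow> coord \<Rightarrow> 'a::comm_ring_1) set" where
  "crossed_homs G act =
     {d. d \<in> extensional (carrier G) \<and>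
         (\<forall>\<phi>\<in>carrier G. \<forall>\<psi>\<in>carrier G.
            d (\<phi> \<otimes>\<^bsub>G\<^esub> \<psi>) = (\<lambda>i. d \<phi> i + act \<phi> (d \<psi>) i))}"

definition Z1 ::
  "('g, 'b) monoid_scheme \<Rightarrow> ('g \<Rightarrow> (coord \<Rightarrow> 'a) \<Rightarrow> (coord \<Rightarrow> 'a))
     \<Rightarrow> ('g \<Rightarrow> coord \<Rightarrow> 'a::comm_ring_1) monoid" where
  "Z1 G act = \<lparr>carrier = crossed_homs G act,
               mult = (\<lambda>d e. \<lambda>g\<in>carrier G. \<lambda>i. d g i + e g i),
               one = (\<lambda>g\<in>carrier G. \<lambda>i. 0)\<rparr>"

definition B1 ::
  "('g, 'b) monoid_scheme \<Rightarrow> ('g \<Rightarrow> (coord \<Rightarrow> 'a) \<Rightarrow> (coord \<Rightarrow> 'a))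
     \<Rightarrow> ('g \<Rightarrow> coord \<Rightarrow> 'a::comm_ring_1) set" where
  "B1 G act = {(\<lambda>g\<in>carrier G. \<lambda>i. act g u i - u i) | u. True}"

end

theory Submission
  imports Defs
begin

text \<open>The four functionals in the theorem, restricted to the principal crossed homomorphisms
  u \<mapsto> (\<phi> \<mapsto> \<phi> u - u), form an invertible integral change of coordinates of A^4. Composing a
  left inverse U of this map with the functionals splits B1 off Z1: every crossed homomorphism
  d is the sum of the coboundary of U d and an element on which U vanishes, i.e. an element of the
  subgroup cut out by the four equations.\<close>

definition principal_crossed_hom ::
  "('g, 'b) monoid_scheme \<Rightarrow> ('g \<Rightarrow> (coord \<Rightarrow> 'a) \<Rightarrow> (coord \<Rightarrow> 'a))
     \<Rightarrow> (coord \<Rightarrow> 'a::comm_ring_1) \<Rightarrow> 'g \<Rightarrow> coord \<Rightarrow> 'a" where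
  "principal_crossed_hom G act u = (\<lambda>g\<in>carrier G. \<lambda>i. act g u i - u i)"

lemma B1_eq_range_principal_crossed_hom: "B1 G act = range (principal_crossed_hom G act)"
  by (auto simp: B1_def principal_crossed_hom_def)

locale additive_action =
  fixes G :: "('g, 'b) monoid_scheme"
    and act :: "'g \<Rightarrow> (coord \<Rightarrow> 'a::comm_ring_1) \<Rightarrow> (coord \<Rightarrow> 'a)"
  assumes group: "group G"
    and act_mult: "\<And>g h v. g \<in> carrier G \<Longrightarrow> h \<in> carrier G \<Longrightarrow>
                     act (g \<otimes>\<^bsub>G\<^esub> h) v = act g (act h v)"
    and act_add: "\<And>g v w. g \<in> carrier G \<Longrightarrow>
                     act g (\<lambda>i. v i + w i) = (\<lambda>i. act g v i + act g w i)"
begin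

lemma act_zero: "g \<in> carrier G \<Longrightarrow> act g (\<lambda>i. 0) = (\<lambda>i. 0)"
  using act_add[of g "\<lambda>i. 0" "\<lambda>i. 0"] by (simp add: fun_eq_iff)

lemma act_neg: "g \<in> carrier G \<Longrightarrow> act g (\<lambda>i. - v i) = (\<lambda>i. - act g v i)"
  using act_add[of g "\<lambda>i. - v i" v] act_zero[of g]
  by (simp add: fun_eq_iff eq_neg_iff_add_eq_0)

lemma act_diff: "g \<in> carrier G \<Longrightarrow> act g (\<lambda>i. v i - w i) = (\<lambda>i. act g v i - act g w i)"
  using act_add[of g v "\<lambda>i. - w i"] act_neg[of g w] by simp

lemma act_of_nat_mult:
  assumes g: "g \<in> carrier G"
  shows "act g (\<lambda>i. of_nat n * v i) = (\<lambda>i. of_nat n * act g v i)"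
proof (induction n)
  case 0
  then show ?case using act_zero[OF g] by simp
next
  case (Suc n)
  have "act g (\<lambda>i. of_nat (Suc n) * v i) = act g (\<lambda>i. v i + of_nat n * v i)"
    by (simp add: algebra_simps)
  then show ?case using act_add[OF g] Suc by (simp add: algebra_simps)
qed

lemma act_of_int_mult:
  assumes g: "g \<in> carrier G"
  shows "act g (\<lambda>i. of_int k * v i) = (\<lambda>i. of_int k * act g v i)"
proof (cases "k \<ge> 0")
  case True
  then obtain n where "k = int n" by (metis nonneg_eq_int)
  then show ?thesis using act_of_nat_mult[OF g] by simp
next
  case False
  then obtain n where "k = - int n" by (metis le_cases neg_0_le_iff_le nonneg_eq_int minus_minus)
  then show ?thesis using act_of_nat_mult[OF g, of n] act_neg[OF g, of "\<lambda>i. of_nat n * v i"]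
    by simp
qed

lemma act_scalar_mult:
  assumes "surj (of_int :: int \<Rightarrow> 'a)" and g: "g \<in> carrier G"
  shows "act g (\<lambda>i. c * v i) = (\<lambda>i. c * act g v i)"
proof -
  obtain k where "c = of_int k" using assms(1) by (metis surj_def)
  then show ?thesis using act_of_int_mult[OF g] by simp
qed

lemma act_basis_expansion:
  assumes "surj (of_int :: int \<Rightarrow> 'a)" and g: "g \<in> carrier G"
  shows "act g v = (\<lambda>j. v X1 * act g (basis X1) j + v X2 * act g (basis X2) j
                       + v Y1 * act g (basis Y1) j + v Y2 * act g (basis Y2) j)"
proof -
  have "v = (\<lambda>j. v X1 * basis X1 j + v X2 * basis X2 j + v Y1 * basis Y1 j + v Y2 * basis Y2 j)"
    by (rule ext, case_tac j) (simp_all add: basis_def)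
  then have "act g v = act g (\<lambda>j. v X1 * basis X1 j + v X2 * basis X2 j
                                  + v Y1 * basis Y1 j + v Y2 * basis Y2 j)"
    by (rule arg_cong)
  then show ?thesis
    by (simp only: act_add[OF g] act_scalar_mult[OF assms])
qed

lemma m_closed: "g \<in> carrier G \<Longrightarrow> h \<in> carrier G \<Longrightarrow> g \<otimes>\<^bsub>G\<^esub> h \<in> carrier G"
  using group by (simp add: group.is_monoid monoid.m_closed)

lemma crossed_homsI:
  assumes "d \<in> extensional (carrier G)"
    and "\<And>\<phi> \<psi>. \<phi> \<in> carrier G \<Longrightarrow> \<psi> \<in> carrier G \<Longrightarrow>
           d (\<phi> \<otimes>\<^bsub>G\<^esub> \<psi>) = (\<lambda>i. d \<phi> i + act \<phi> (d \<psi>) i)"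
  shows "d \<in> crossed_homs G act"
  using assms unfolding crossed_homs_def by blast

lemma crossed_homsD:
  "d \<in> crossed_homs G act \<Longrightarrow> \<phi> \<in> carrier G \<Longrightarrow> \<psi> \<in> carrier G \<Longrightarrow>
     d (\<phi> \<otimes>\<^bsub>G\<^esub> \<psi>) = (\<lambda>i. d \<phi> i + act \<phi> (d \<psi>) i)"
  unfolding crossed_homs_def by blast

lemma crossed_homs_extensional: "d \<in> crossed_homs G act \<Longrightarrow> d \<in> extensional (carrier G)"
  unfolding crossed_homs_def by blast

lemma crossed_homs_zero: "(\<lambda>g\<in>carrier G. \<lambda>i. 0) \<in> crossed_homs G act"
  by (rule crossed_homsI) (simp_all add: m_closed act_zero)

lemma crossed_homs_add:
  assumes d: "d \<in> crossed_homs G act" and e: "e \<in> crossed_homs G act"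
  shows "(\<lambda>g\<in>carrier G. \<lambda>i. d g i + e g i) \<in> crossed_homs G act"
proof (rule crossed_homsI)
  fix \<phi> \<psi> assume \<phi>: "\<phi> \<in> carrier G" and \<psi>: "\<psi> \<in> carrier G"
  show "(\<lambda>g\<in>carrier G. \<lambda>i. d g i + e g i) (\<phi> \<otimes>\<^bsub>G\<^esub> \<psi>) =
    (\<lambda>i. (\<lambda>g\<in>carrier G. \<lambda>i. d g i + e g i) \<phi> i
         + act \<phi> ((\<lambda>g\<in>carrier G. \<lambda>i. d g i + e g i) \<psi>) i)"
    using \<phi> \<psi> m_closed crossed_homsD[OF d \<phi> \<psi>] crossed_homsD[OF e \<phi> \<psi>]
    by (simp add: act_add algebra_simps)
qed simp

lemma crossed_homs_diff:
  assumes d: "d \<in> crossed_homs G act" and e: "e \<in> crossed_homs G act"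
  shows "(\<lambda>g\<in>carrier G. \<lambda>i. d g i - e g i) \<in> crossed_homs G act"
proof (rule crossed_homsI)
  fix \<phi> \<psi> assume \<phi>: "\<phi> \<in> carrier G" and \<psi>: "\<psi> \<in> carrier G"
  show "(\<lambda>g\<in>carrier G. \<lambda>i. d g i - e g i) (\<phi> \<otimes>\<^bsub>G\<^esub> \<psi>) =
    (\<lambda>i. (\<lambda>g\<in>carrier G. \<lambda>i. d g i - e g i) \<phi> i
         + act \<phi> ((\<lambda>g\<in>carrier G. \<lambda>i. d g i - e g i) \<psi>) i)"
    using \<phi> \<psi> m_closed crossed_homsD[OF d \<phi> \<psi>] crossed_homsD[OF e \<phi> \<psi>]
    by (simp add: act_diff algebra_simps)
qed simp

lemma group_Z1: "group (Z1 G act)"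
proof (rule groupI)
  fix d assume d: "d \<in> carrier (Z1 G act)"
  then have d_ext: "d \<in> extensional (carrier G)"
    by (simp add: Z1_def crossed_homs_extensional)
  show "\<one>\<^bsub>Z1 G act\<^esub> \<otimes>\<^bsub>Z1 G act\<^esub> d = d"
    using d_ext by (auto simp: Z1_def extensional_def fun_eq_iff)
  have "(\<lambda>g\<in>carrier G. \<lambda>i. (\<lambda>g\<in>carrier G. \<lambda>i. 0) g i - d g i) \<in> carrier (Z1 G act)"
    using d crossed_homs_diff[OF crossed_homs_zero] by (simp add: Z1_def)
  moreover have "(\<lambda>g\<in>carrier G. \<lambda>i. (\<lambda>g\<in>carrier G. \<lambda>i. 0) g i - d g i) \<otimes>\<^bsub>Z1 G act\<^esub> d = \<one>\<^bsub>Z1 G act\<^esub>"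
    by (simp add: Z1_def cong: restrict_cong)
  ultimately show "\<exists>e\<in>carrier (Z1 G act). e \<otimes>\<^bsub>Z1 G act\<^esub> d = \<one>\<^bsub>Z1 G act\<^esub>"
    by blast
qed (auto simp: Z1_def crossed_homs_add crossed_homs_zero algebra_simps cong: restrict_cong)

lemma principal_crossed_hom_in_crossed_homs:
  "principal_crossed_hom G act u \<in> crossed_homs G act"
proof (rule crossed_homsI)
  fix \<phi> \<psi> assume \<phi>: "\<phi> \<in> carrier G" and \<psi>: "\<psi> \<in> carrier G"
  show "principal_crossed_hom G act u (\<phi> \<otimes>\<^bsub>G\<^esub> \<psi>) =
    (\<lambda>i. principal_crossed_hom G act u \<phi> i + act \<phi> (principal_crossed_hom G act u \<psi>) i)"
    using \<phi> \<psi> m_closed act_mult[OF \<phi> \<psi>] act_diff[OF \<phi>, of "act \<psi> u" u]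
    by (simp add: principal_crossed_hom_def)
qed (simp add: principal_crossed_hom_def)

lemma principal_crossed_hom_add:
  "principal_crossed_hom G act (\<lambda>j. u j + v j)
     = (\<lambda>g\<in>carrier G. \<lambda>i. principal_crossed_hom G act u g i + principal_crossed_hom G act v g i)"
  by (unfold principal_crossed_hom_def, rule restrict_ext) (simp add: act_add fun_eq_iff)

lemma principal_crossed_hom_zero:
  "principal_crossed_hom G act (\<lambda>j. 0) = (\<lambda>g\<in>carrier G. \<lambda>i. 0)"
  by (unfold principal_crossed_hom_def, rule restrict_ext) (simp add: act_zero)

end

locale split_coboundaries = additive_action G act
  for G :: "('g, 'b) monoid_scheme"
    and act :: "'g \<Rightarrow> (coord \<Rightarrow> 'a::comm_ring_1) \<Rightarrow> (coord \<Rightarrow> 'a)" +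
  fixes U :: "('g \<Rightarrow> coord \<Rightarrow> 'a) \<Rightarrow> coord \<Rightarrow> 'a"
  assumes U_add: "\<And>d e. d \<in> crossed_homs G act \<Longrightarrow> e \<in> crossed_homs G act \<Longrightarrow>
                    U (\<lambda>g\<in>carrier G. \<lambda>i. d g i + e g i) = (\<lambda>j. U d j + U e j)"
    and U_principal: "\<And>u. U (principal_crossed_hom G act u) = u"
begin

definition projection :: "('g \<Rightarrow> coord \<Rightarrow> 'a) \<Rightarrow> 'g \<Rightarrow> coord \<Rightarrow> 'a" where
  "projection d = (\<lambda>g\<in>carrier G. \<lambda>i. d g i - principal_crossed_hom G act (U d) g i)"

lemma projection_in_crossed_homs:
  "d \<in> crossed_homs G act \<Longrightarrow> projection d \<in> crossed_homs G act"
  unfolding projection_def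
  by (rule crossed_homs_diff[OF _ principal_crossed_hom_in_crossed_homs])

lemma projection_plus_principal:
  assumes d: "d \<in> crossed_homs G act"
  shows "(\<lambda>g\<in>carrier G. \<lambda>i. projection d g i + principal_crossed_hom G act (U d) g i) = d"
  by (rule extensionalityI[OF _ crossed_homs_extensional[OF d]]) (simp_all add: projection_def)

lemma U_projection:
  assumes d: "d \<in> crossed_homs G act"
  shows "U (projection d) = (\<lambda>j. 0)"
proof -
  have "U d = U (\<lambda>g\<in>carrier G. \<lambda>i. projection d g i + principal_crossed_hom G act (U d) g i)"
    by (simp only: projection_plus_principal[OF d])
  also have "\<dots> = (\<lambda>j. U (projection d) j + U d j)"
    using U_add[OF projection_in_crossed_homs[OF d] principal_crossed_hom_in_crossed_homs]
    by (simp only: U_principal)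
  finally show ?thesis by (simp add: fun_eq_iff)
qed

lemma projection_fixes_kernel:
  assumes d: "d \<in> crossed_homs G act" and U_d: "U d = (\<lambda>j. 0)"
  shows "projection d = d"
  by (rule extensionalityI[OF _ crossed_homs_extensional[OF d]])
    (simp_all add: projection_def U_d principal_crossed_hom_zero)

lemma projection_image:
  "projection ` crossed_homs G act = {d \<in> crossed_homs G act. U d = (\<lambda>j. 0)}"
proof (intro equalityI subsetI)
  fix e assume "e \<in> projection ` crossed_homs G act"
  then obtain d where d: "d \<in> crossed_homs G act" and e: "e = projection d" by blast
  show "e \<in> {d \<in> crossed_homs G act. U d = (\<lambda>j. 0)}"
    using projection_in_crossed_homs[OF d] U_projection[OF d] e by simp
next
  fix d assume "d \<in> {d \<in> crossed_homs G act. U d = (\<lambda>j. 0)}"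
  then have d: "d \<in> crossed_homs G act" and U_d: "U d = (\<lambda>j. 0)" by simp_all
  show "d \<in> projection ` crossed_homs G act"
    using image_eqI[of d projection d, OF _ d] projection_fixes_kernel[OF d U_d] by simp
qed

lemma projection_add:
  assumes "d \<in> crossed_homs G act" "e \<in> crossed_homs G act"
  shows "projection (\<lambda>g\<in>carrier G. \<lambda>i. d g i + e g i)
           = (\<lambda>g\<in>carrier G. \<lambda>i. projection d g i + projection e g i)"
  unfolding projection_def U_add[OF assms] principal_crossed_hom_add
  by (rule restrict_ext) (simp add: fun_eq_iff)

lemma projection_hom: "projection \<in> hom (Z1 G act) (Z1 G act)"
  by (rule homI) (simp_all add: Z1_def projection_in_crossed_homs projection_add)

lemma projection_principal: "projection (principal_crossed_hom G act u) = \<one>\<^bsub>Z1 G act\<^esub>"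
  by (simp add: projection_def U_principal Z1_def cong: restrict_cong)

lemma projection_eq_one_imp_principal:
  assumes d: "d \<in> crossed_homs G act" and proj_d: "projection d = \<one>\<^bsub>Z1 G act\<^esub>"
  shows "d = principal_crossed_hom G act (U d)"
proof -
  have "d = (\<lambda>g\<in>carrier G. \<lambda>i. projection d g i + principal_crossed_hom G act (U d) g i)"
    by (simp only: projection_plus_principal[OF d])
  also have "\<dots> = principal_crossed_hom G act (U d)"
    unfolding proj_d by (simp add: Z1_def principal_crossed_hom_def cong: restrict_cong)
  finally show ?thesis .
qed

lemma projection_kernel:
  assumes "\<one>\<^bsub>H\<^esub> = \<one>\<^bsub>Z1 G act\<^esub>"
  shows "kernel (Z1 G act) H projection = B1 G act"
proof -
  have "carrier (Z1 G act) = crossed_homs G act"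
    by (simp add: Z1_def)
  then show ?thesis
    unfolding kernel_def B1_eq_range_principal_crossed_hom assms
    using projection_eq_one_imp_principal projection_principal principal_crossed_hom_in_crossed_homs
    by blast
qed

theorem Z1_Mod_B1_iso:
  "Z1 G act Mod B1 G act \<cong> (Z1 G act)\<lparr>carrier := {d \<in> crossed_homs G act. U d = (\<lambda>j. 0)}\<rparr>"
proof -
  let ?S = "(Z1 G act)\<lparr>carrier := projection ` carrier (Z1 G act)\<rparr>"
  interpret Z1: group_hom "Z1 G act" "Z1 G act" projection
    using group_Z1 projection_hom by (simp add: group_hom_def group_hom_axioms_def)
  have "group_hom (Z1 G act) ?S projection"
    using Z1.induced_group_hom[OF Z1.G.subgroup_self] by simp
  then have "Z1 G act Mod kernel (Z1 G act) ?S projection \<cong> ?S"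
    by (rule group_hom.FactGroup_iso) simp
  moreover have "kernel (Z1 G act) ?S projection = B1 G act"
    by (rule projection_kernel) simp
  moreover have "carrier (Z1 G act) = crossed_homs G act"
    by (simp add: Z1_def)
  ultimately show ?thesis
    by (simp only: projection_image)
qed

end

locale goeritz_action = additive_action G act
  for G :: "('g, 'b) monoid_scheme"
    and act :: "'g \<Rightarrow> (coord \<Rightarrow> 'a::comm_ring_1) \<Rightarrow> (coord \<Rightarrow> 'a)" +
  fixes \<alpha> \<beta> \<gamma> \<delta> :: 'g
  assumes A_quot_Z: "surj (of_int :: int \<Rightarrow> 'a)"
    and gens: "\<alpha> \<in> carrier G" "\<beta> \<in> carrier G" "\<gamma> \<in> carrier G" "\<delta> \<in> carrier G"
    and act_\<alpha>: "act \<alpha> (basis X1) = (\<lambda>j. - basis X1 j)"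
                "act \<alpha> (basis X2) = (\<lambda>j. - basis X2 j)"
                "act \<alpha> (basis Y1) = (\<lambda>j. - basis Y1 j)"
                "act \<alpha> (basis Y2) = (\<lambda>j. - basis Y2 j)"
    and act_\<beta>: "act \<beta> (basis X1) = basis X1"
                "act \<beta> (basis X2) = (\<lambda>j. - basis X2 j)"
                "act \<beta> (basis Y1) = basis Y1"
                "act \<beta> (basis Y2) = (\<lambda>j. - basis Y2 j)"
    and act_\<gamma>: "act \<gamma> (basis X1) = (\<lambda>j. - basis X2 j)"
                "act \<gamma> (basis X2) = (\<lambda>j. - basis X1 j)"
                "act \<gamma> (basis Y1) = (\<lambda>j. - basis Y2 j)"
                "act \<gamma> (basis Y2) = (\<lambda>j. - basis Y1 j)"
    and act_\<delta>: "act \<delta> (basis X1) = (\<lambda>j. - basis X1 j + basis X2 j)"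
                "act \<delta> (basis X2) = (\<lambda>j. - basis X1 j)"
                "act \<delta> (basis Y1) = basis Y2"
                "act \<delta> (basis Y2) = (\<lambda>j. - basis Y1 j - basis Y2 j)"
begin

lemma act_\<alpha>_apply: "act \<alpha> v = (\<lambda>j. - v j)"
  by (rule ext, subst act_basis_expansion[OF A_quot_Z gens(1)], case_tac j)
    (simp_all only: act_\<alpha>, simp_all add: basis_def)

lemma act_\<beta>_apply:
  "act \<beta> v = (\<lambda>j. case j of X1 \<Rightarrow> v X1 | X2 \<Rightarrow> - v X2 | Y1 \<Rightarrow> v Y1 | Y2 \<Rightarrow> - v Y2)"
  by (rule ext, subst act_basis_expansion[OF A_quot_Z gens(2)], case_tac j)
    (simp_all only: act_\<beta>, simp_all add: basis_def)

lemma act_\<gamma>_apply: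
  "act \<gamma> v = (\<lambda>j. case j of X1 \<Rightarrow> - v X2 | X2 \<Rightarrow> - v X1 | Y1 \<Rightarrow> - v Y2 | Y2 \<Rightarrow> - v Y1)"
  by (rule ext, subst act_basis_expansion[OF A_quot_Z gens(3)], case_tac j)
    (simp_all only: act_\<gamma>, simp_all add: basis_def)

lemma act_\<delta>_apply:
  "act \<delta> v = (\<lambda>j. case j of X1 \<Rightarrow> - v X1 - v X2 | X2 \<Rightarrow> v X1 | Y1 \<Rightarrow> - v Y2 | Y2 \<Rightarrow> v Y1 - v Y2)"
  by (rule ext, subst act_basis_expansion[OF A_quot_Z gens(4)], case_tac j)
    (simp_all only: act_\<delta>, simp_all add: basis_def)

text \<open>On the coboundary of u the four functionals of the theorem take the values
  (-u2, u2 - u1, u3 - u4, -u3), a unimodular change of coordinates; the vector below inverts it.\<close>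
definition coboundary_part :: "('g \<Rightarrow> coord \<Rightarrow> 'a) \<Rightarrow> coord \<Rightarrow> 'a" where
  "coboundary_part d = (\<lambda>j. case j of
      X1 \<Rightarrow> - (d \<delta> X1 - d \<alpha> X1) - (d \<gamma> X2 - d \<beta> X2)
    | X2 \<Rightarrow> - (d \<delta> X1 - d \<alpha> X1)
    | Y1 \<Rightarrow> - (d \<beta> Y2 - d \<delta> Y2)
    | Y2 \<Rightarrow> - (d \<beta> Y2 - d \<delta> Y2) - (d \<gamma> Y1 - d \<alpha> Y1))"

lemma coboundary_part_add:
  "coboundary_part (\<lambda>g\<in>carrier G. \<lambda>i. d g i + e g i)
     = (\<lambda>j. coboundary_part d j + coboundary_part e j)"
  by (rule ext, case_tac j) (simp_all add: coboundary_part_def gens algebra_simps)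

lemma coboundary_part_principal: "coboundary_part (principal_crossed_hom G act u) = u"
  by (rule ext, case_tac x)
    (simp_all add: coboundary_part_def principal_crossed_hom_def gens
       act_\<alpha>_apply act_\<beta>_apply act_\<gamma>_apply act_\<delta>_apply)

lemma coboundary_part_eq_zero_iff:
  "coboundary_part d = (\<lambda>j. 0) \<longleftrightarrow>
     d \<delta> X1 - d \<alpha> X1 = 0 \<and> d \<gamma> X2 - d \<beta> X2 = 0 \<and>
     d \<gamma> Y1 - d \<alpha> Y1 = 0 \<and> d \<beta> Y2 - d \<delta> Y2 = 0"
  (is "?vanishes \<longleftrightarrow> ?conditions")
proof
  assume "coboundary_part d = (\<lambda>j. 0)"
  then have "coboundary_part d X1 = 0" "coboundary_part d X2 = 0"
    "coboundary_part d Y1 = 0" "coboundary_part d Y2 = 0"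
    by simp_all
  then show ?conditions by (simp add: coboundary_part_def)
next
  assume ?conditions
  show "coboundary_part d = (\<lambda>j. 0)"
  proof
    fix j show "coboundary_part d j = 0"
      using \<open>?conditions\<close> by (cases j) (simp_all add: coboundary_part_def)
  qed
qed

theorem Z1_Mod_B1_iso_Goeritz:
  "Z1 G act Mod B1 G act \<cong>
     (Z1 G act)\<lparr>carrier :=
        {d \<in> crossed_homs G act.
           d \<delta> X1 - d \<alpha> X1 = 0 \<and> d \<gamma> X2 - d \<beta> X2 = 0 \<and>
           d \<gamma> Y1 - d \<alpha> Y1 = 0 \<and> d \<beta> Y2 - d \<delta> Y2 = 0}\<rparr>"
proof -
  have "split_coboundaries G act coboundary_part"
    by (intro split_coboundaries.intro additive_action_axioms split_coboundaries_axioms.intro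
        coboundary_part_add coboundary_part_principal)
  from split_coboundaries.Z1_Mod_B1_iso[OF this] show ?thesis
    by (simp only: coboundary_part_eq_zero_iff)
qed

end

theorem lemma2p3:
  fixes G :: "('g, 'b) monoid_scheme"
    and act :: "'g \<Rightarrow> (coord \<Rightarrow> 'a::comm_ring_1) \<Rightarrow> (coord \<Rightarrow> 'a)"
    and \<alpha> \<beta> \<gamma> \<delta> :: 'g
  assumes A_quot_Z: "surj (of_int :: int \<Rightarrow> 'a)"
    and A_nontriv: "(1::'a) \<noteq> 0"
    and grp: "group G"
    and gens: "\<alpha> \<in> carrier G" "\<beta> \<in> carrier G" "\<gamma> \<in> carrier G" "\<delta> \<in> carrier G"
    and generated: "generate G {\<alpha>, \<beta>, \<gamma>, \<delta>} = carrier G"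
    and act_one: "\<And>v. act \<one>\<^bsub>G\<^esub> v = v"
    and act_mult: "\<And>g h v. g \<in> carrier G \<Longrightarrow> h \<in> carrier G \<Longrightarrow>
                     act (g \<otimes>\<^bsub>G\<^esub> h) v = act g (act h v)"
    and act_add: "\<And>g v w. g \<in> carrier G \<Longrightarrow>
                     act g (\<lambda>i. v i + w i) = (\<lambda>i. act g v i + act g w i)"
    and act_\<alpha>: "act \<alpha> (basis X1) = (\<lambda>j. - basis X1 j)"
                "act \<alpha> (basis X2) = (\<lambda>j. - basis X2 j)"
                "act \<alpha> (basis Y1) = (\<lambda>j. - basis Y1 j)"
                "act \<alpha> (basis Y2) = (\<lambda>j. - basis Y2 j)"
    and act_\<beta>: "act \<beta> (basis X1) = basis X1"
                "act \<beta> (basis X2) = (\<lambda>j. - basis X2 j)"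
                "act \<beta> (basis Y1) = basis Y1"
                "act \<beta> (basis Y2) = (\<lambda>j. - basis Y2 j)"
    and act_\<gamma>: "act \<gamma> (basis X1) = (\<lambda>j. - basis X2 j)"
                "act \<gamma> (basis X2) = (\<lambda>j. - basis X1 j)"
                "act \<gamma> (basis Y1) = (\<lambda>j. - basis Y2 j)"
                "act \<gamma> (basis Y2) = (\<lambda>j. - basis Y1 j)"
    and act_\<delta>: "act \<delta> (basis X1) = (\<lambda>j. - basis X1 j + basis X2 j)"
                "act \<delta> (basis X2) = (\<lambda>j. - basis X1 j)"
                "act \<delta> (basis Y1) = basis Y2"
                "act \<delta> (basis Y2) = (\<lambda>j. - basis Y1 j - basis Y2 j)"
  shows "Z1 G act Mod B1 G act \<cong>
           (Z1 G act)\<lparr>carrier :=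
              {d \<in> crossed_homs G act.
                 d \<delta> X1 - d \<alpha> X1 = 0 \<and> d \<gamma> X2 - d \<beta> X2 = 0 \<and>
                 d \<gamma> Y1 - d \<alpha> Y1 = 0 \<and> d \<beta> Y2 - d \<delta> Y2 = 0}\<rparr>"
proof -
  interpret goeritz_action G act \<alpha> \<beta> \<gamma> \<delta>
    by (intro goeritz_action.intro additive_action.intro goeritz_action_axioms.intro) (fact assms)+
  show ?thesis
    by (rule Z1_Mod_B1_iso_Goeritz)
qed

end
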